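(* Let $t\in\mathcal{M}$. Then there exists a tight derivation $\Phi\triangleright\Gamma\vdash^{(0,0,0,|t|)}t:\mathtt{t}$ in system $\mathscr{E}$, for some context $\Gamma$ and some tight type $\mathtt{t}$.
   Context: Pair pattern calculus: patterns $p,q ::= x\mid\langle p,q\rangle$ (linear); $\mathrm{var}(p)$ = variables of $p$; $p\# q$ means disjoint variables. Terms $t,u ::= x\mid\lambda p.t\mid\langle t,u\rangle\mid t\,u\mid t[p/u]$, $\mathrm{var}(p)$ bound in $t$ in $\lambda p.t$ and $t[p/u]$; terms modulo $\alpha$. Canonical forms $\mathcal{M} ::= \lambda p.\mathcal{M}\mid\langle t,t\rangle\mid\mathcal{M}[\langle p_1,p_2\rangle/\mathcal{N}]\mid\mathcal{N}$, $\mathcal{N} ::= x\mid\mathcal{N}\,t\mid\mathcal{N}[\langle p_1,p_2\rangle/\mathcal{N}]$, with size $|x|=0$, $|\langle t,u\rangle|=1$, $|\mathcal{N}t|=|\mathcal{N}|+1$, $|\lambda p.\mathcal{M}|=|\mathcal{M}|+1$, $|\mathcal{M}[\langle p_1,p_2\rangle/\mathcal{N}]|=|\mathcal{M}|+|\mathcal{N}|+1$. System $\mathscr{E}$. Types: tight types $\mathtt{t} ::= \bullet_{\mathcal{N}}\mid\bullet_{\mathcal{M}}$; types $\sigma ::= \mathtt{t}\mid \mathcal{A}_1\times\mathcal{A}_2\mid \mathcal{A}\to\sigma$; multi-types $\mathcal{A} ::= [\sigma_k]_{k\in K}$ (finite, possibly empty). Contexts map variables to multi-types, $\mathrm{dom}(\Gamma)$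 = variables with non-empty multi-type; $\wedge$ pointwise multiset union; $\Gamma|_p$ restriction to $\mathrm{var}(p)$; $\Gamma\setminus\mathrm{var}(p)$ removal. $\mathrm{tight}(\sigma)$ iff $\sigma\in\{\bullet_{\mathcal{N}},\bullet_{\mathcal{M}}\}$, extended elementwise. Rules: (pat_v) $x:\mathcal{A}\Vdash^{(1,0,0)} x:\mathcal{A}$. (pat_×) from $\Gamma\Vdash^{(e_p,m_p,f_p)}p:\mathcal{A}$, $\Delta\Vdash^{(e_q,m_q,f_q)}q:\mathcal{B}$, $p\#q$ infer $\Gamma\wedge\Delta\Vdash^{(e_p+e_q,1+m_p+m_q,f_p+f_q)}\langle p,q\rangle:[\mathcal{A}\times\mathcal{B}]$. (pat_p) if $\mathrm{dom}(\Gamma)\subseteq\mathrm{var}(\langle p,q\rangle)$ and $\mathrm{tight}(\Gamma)$ then $\Gamma\Vdash^{(0,0,1)}\langle p,q\rangle:[\bullet_{\mathcal{N}}]$. (ax) $x:[\sigma]\vdash^{(0,0,0,0)}x:\sigma$. (abs) from $\Gamma\vdash^{(b,e,m,f)}t:\sigma$ and $\Gamma|_p\Vdash^{(e_p,m_p,f_p)}p:\mathcal{A}$ infer $\Gamma\setminus\mathrm{var}(p)\vdash^{(b+1,e+e_p,m+m_p,f+f_p)}\lambda p.t:\mathcal{A}\to\sigma$. (abs_p) from $\Gamma\vdash^{(b,e,m,f)}t:\mathtt{t}$ ($\mathtt{t}$ tight) and $\mathrm{tight}(\Gamma|_p)$ infer $\Gamma\setminus\mathrm{var}(p)\vdash^{(b,e,m,f+1)}\lambda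 p.t:\bullet_{\mathcal{M}}$. (many) from $(\Gamma_k\vdash^{(b_k,e_k,m_k,f_k)}t:\sigma_k)_{k\in K}$ infer $\wedge_k\Gamma_k\vdash^{(\sum b_k,\sum e_k,\sum m_k,\sum f_k)}t:[\sigma_k]_{k\in K}$. (app) from $\Gamma\vdash^{(b_t,e_t,m_t,f_t)}t:\mathcal{A}\to\sigma$, $\Delta\vdash^{(b_u,e_u,m_u,f_u)}u:\mathcal{A}$ infer $\Gamma\wedge\Delta\vdash^{(b_t+b_u,e_t+e_u,m_t+m_u,f_t+f_u)}t\,u:\sigma$. (app_p) from $\Gamma\vdash^{(b,e,m,f)}t:\bullet_{\mathcal{N}}$ infer $\Gamma\vdash^{(b,e,m,f+1)}t\,u:\bullet_{\mathcal{N}}$. (pair) from $\Gamma\vdash^{(b_t,e_t,m_t,f_t)}t:\mathcal{A}$, $\Delta\vdash^{(b_u,e_u,m_u,f_u)}u:\mathcal{B}$ infer $\Gamma\wedge\Delta\vdash^{(b_t+b_u,e_t+e_u,m_t+m_u,f_t+f_u)}\langle t,u\rangle:\mathcal{A}\times\mathcal{B}$. (pair_p) $\vdash^{(0,0,0,1)}\langle t,u\rangle:\bullet_{\mathcal{M}}$. (match) from $\Gamma\vdash^{(b_t,e_t,m_t,f_t)}t:\sigma$, $\Gamma|_p\Vdash^{(e_p,m_p,f_p)}p:\mathcal{A}$, $\Delta\vdash^{(b_u,e_u,m_u,f_u)}u:\mathcal{A}$ infer $(\Gamma\setminus\mathrm{var}(p))\wedge\Delta\vdash^{(b_t+b_u,e_t+e_u+e_p,m_t+m_u+m_p,f_t+f_u+f_p)}t[p/u]:\sigma$.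 A derivation is tight if its context and its type are tight. *)

theory Defs
  imports "HOL-Library.Multiset"
begin

type_synonym var = nat

datatype pat = PVar var | PPair pat pat

fun pvars :: "pat \<Rightarrow> var set" where
  "pvars (PVar x) = {x}"
| "pvars (PPair p q) = pvars p \<union> pvars q"

fun linear_pat :: "pat \<Rightarrow> bool" where
  "linear_pat (PVar x) = True"
| "linear_pat (PPair p q) = (linear_pat p \<and> linear_pat q \<and> pvars p \<inter> pvars q = {})"

datatype trm = TVar var | TLam pat trm | TPair trm trm | TApp trm trm
             | TSub trm pat trm   (* TSub t p u  represents  t[p/u] *)

fun wf_trm :: "trm \<Rightarrow> bool" where
  "wf_trm (TVar x) = True"
| "wf_trm (TLam p t) = (linear_pat p \<and> wf_trm t)"
| "wf_trm (TPair t u) = (wf_trm t \<and> wf_trm u)"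
| "wf_trm (TApp t u) = (wf_trm t \<and> wf_trm u)"
| "wf_trm (TSub t p u) = (linear_pat p \<and> wf_trm t \<and> wf_trm u)"

inductive canM :: "trm \<Rightarrow> bool" and canN :: "trm \<Rightarrow> bool" where
  cM_lam: "canM t \<Longrightarrow> canM (TLam p t)"
| cM_pair: "canM (TPair t u)"
| cM_sub: "canM t \<Longrightarrow> canN u \<Longrightarrow> canM (TSub t (PPair p1 p2) u)"
| cM_N: "canN t \<Longrightarrow> canM t"
| cN_var: "canN (TVar x)"
| cN_app: "canN t \<Longrightarrow> canN (TApp t u)"
| cN_sub: "canN t \<Longrightarrow> canN u \<Longrightarrow> canN (TSub t (PPair p1 p2) u)"

(* size of canonical forms (the clauses agree with the paper's on canonical forms) *)
fun csize :: "trm \<Rightarrow> nat" where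
  "csize (TVar x) = 0"
| "csize (TPair t u) = 1"
| "csize (TApp t u) = csize t + 1"
| "csize (TLam p t) = csize t + 1"
| "csize (TSub t p u) = csize t + csize u + 1"

datatype ty = TightN | TightM | Prod "ty multiset" "ty multiset" | Arr "ty multiset" ty

type_synonym mty = "ty multiset"
type_synonym ctx = "var \<Rightarrow> mty"

definition tight :: "ty \<Rightarrow> bool" where
  "tight \<sigma> \<longleftrightarrow> \<sigma> = TightN \<or> \<sigma> = TightM"

definition tight_m :: "mty \<Rightarrow> bool" where
  "tight_m A \<longleftrightarrow> (\<forall>\<sigma>\<in>#A. tight \<sigma>)"

definition tight_ctx :: "ctx \<Rightarrow> bool" where
  "tight_ctx \<Gamma> \<longleftrightarrow> (\<forall>x. tight_m (\<Gamma> x))"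

definition cdom :: "ctx \<Rightarrow> var set" where
  "cdom \<Gamma> = {x. \<Gamma> x \<noteq> {#}}"

definition empty_ctx :: ctx where
  "empty_ctx = (\<lambda>_. {#})"

definition single_ctx :: "var \<Rightarrow> mty \<Rightarrow> ctx" where
  "single_ctx x A = (\<lambda>y. if y = x then A else {#})"

definition ctx_union :: "ctx \<Rightarrow> ctx \<Rightarrow> ctx" (infixl "\<and>\<^sub>c" 65) where
  "ctx_union \<Gamma> \<Delta> = (\<lambda>x. \<Gamma> x + \<Delta> x)"

definition ctx_restrict :: "ctx \<Rightarrow> pat \<Rightarrow> ctx" where
  "ctx_restrict \<Gamma> p = (\<lambda>x. if x \<in> pvars p then \<Gamma> x else {#})"

definition ctx_remove :: "ctx \<Rightarrow> pat \<Rightarrow> ctx" where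
  "ctx_remove \<Gamma> p = (\<lambda>x. if x \<in> pvars p then {#} else \<Gamma> x)"

inductive pat_typ :: "ctx \<Rightarrow> pat \<Rightarrow> mty \<Rightarrow> nat \<Rightarrow> nat \<Rightarrow> nat \<Rightarrow> bool" where
  pat_v: "pat_typ (single_ctx x A) (PVar x) A 1 0 0"
| pat_prod: "pat_typ \<Gamma> p A ep mp fp \<Longrightarrow> pat_typ \<Delta> q B eq mq fq \<Longrightarrow> pvars p \<inter> pvars q = {}
    \<Longrightarrow> pat_typ (\<Gamma> \<and>\<^sub>c \<Delta>) (PPair p q) {#Prod A B#} (ep + eq) (1 + mp + mq) (fp + fq)"
| pat_p: "cdom \<Gamma> \<subseteq> pvars (PPair p q) \<Longrightarrow> tight_ctx \<Gamma>
    \<Longrightarrow> pat_typ \<Gamma> (PPair p q) {#TightN#} 0 0 1"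

inductive ttyp :: "ctx \<Rightarrow> trm \<Rightarrow> ty \<Rightarrow> nat \<Rightarrow> nat \<Rightarrow> nat \<Rightarrow> nat \<Rightarrow> bool"
  and mtyp :: "ctx \<Rightarrow> trm \<Rightarrow> mty \<Rightarrow> nat \<Rightarrow> nat \<Rightarrow> nat \<Rightarrow> nat \<Rightarrow> bool" where
  ax: "ttyp (single_ctx x {#\<sigma>#}) (TVar x) \<sigma> 0 0 0 0"
| abs: "ttyp \<Gamma> t \<sigma> b e m f \<Longrightarrow> pat_typ (ctx_restrict \<Gamma> p) p A ep mp fp
    \<Longrightarrow> ttyp (ctx_remove \<Gamma> p) (TLam p t) (Arr A \<sigma>) (b + 1) (e + ep) (m + mp) (f + fp)"
| abs_p: "ttyp \<Gamma> t \<tau> b e m f \<Longrightarrow> tight \<tau> \<Longrightarrow> tight_ctx (ctx_restrict \<Gamma> p)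
    \<Longrightarrow> ttyp (ctx_remove \<Gamma> p) (TLam p t) TightM b e m (f + 1)"
| app: "ttyp \<Gamma> t (Arr A \<sigma>) bt et mt ft \<Longrightarrow> mtyp \<Delta> u A bu eu mu fu
    \<Longrightarrow> ttyp (\<Gamma> \<and>\<^sub>c \<Delta>) (TApp t u) \<sigma> (bt + bu) (et + eu) (mt + mu) (ft + fu)"
| app_p: "ttyp \<Gamma> t TightN b e m f \<Longrightarrow> ttyp \<Gamma> (TApp t u) TightN b e m (f + 1)"
| pair: "mtyp \<Gamma> t A bt et mt ft \<Longrightarrow> mtyp \<Delta> u B bu eu mu fu
    \<Longrightarrow> ttyp (\<Gamma> \<and>\<^sub>c \<Delta>) (TPair t u) (Prod A B) (bt + bu) (et + eu) (mt + mu) (ft + fu)"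
| pair_p: "ttyp empty_ctx (TPair t u) TightM 0 0 0 1"
| match: "ttyp \<Gamma> t \<sigma> bt et mt ft \<Longrightarrow> pat_typ (ctx_restrict \<Gamma> p) p A ep mp fp
    \<Longrightarrow> mtyp \<Delta> u A bu eu mu fu
    \<Longrightarrow> ttyp (ctx_remove \<Gamma> p \<and>\<^sub>c \<Delta>) (TSub t p u) \<sigma> (bt + bu) (et + eu + ep) (mt + mu + mp) (ft + fu + fp)"
  (* rule many, for a finite family, built up one premise at a time *)
| many_empty: "mtyp empty_ctx t {#} 0 0 0 0"
| many_add: "ttyp \<Gamma> t \<sigma> b e m f \<Longrightarrow> mtyp \<Delta> t A b' e' m' f'
    \<Longrightarrow> mtyp (\<Gamma> \<and>\<^sub>c \<Delta>) t (add_mset \<sigma> A) (b + b') (e + e') (m + m') (f + f')"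

end

theory Submission
  imports Defs
begin

(* Induction on canonical forms, using only the persistent rules ax, app_p, abs_p, pair_p and
   match with its pair pattern typed by pat_p: neutral terms get \<bullet>N, the other canonical forms
   \<bullet>M, in tight contexts.  These rules leave b, e, m at zero, and every one of them except ax
   adds exactly one to f, at exactly the constructors counted by the size. *)

lemma tight_ctx_empty: "tight_ctx empty_ctx"
  by (simp add: tight_ctx_def tight_m_def empty_ctx_def)

lemma tight_ctx_single: "tight \<sigma> \<Longrightarrow> tight_ctx (single_ctx x {#\<sigma>#})"
  by (simp add: tight_ctx_def tight_m_def single_ctx_def)

lemma tight_ctx_union: "tight_ctx \<Gamma> \<Longrightarrow> tight_ctx \<Delta> \<Longrightarrow> tight_ctx (\<Gamma> \<and>\<^sub>c \<Delta>)"
  by (auto simp: tight_ctx_def tight_m_def ctx_union_def)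

lemma tight_ctx_restrict: "tight_ctx \<Gamma> \<Longrightarrow> tight_ctx (ctx_restrict \<Gamma> p)"
  by (simp add: tight_ctx_def tight_m_def ctx_restrict_def)

lemma tight_ctx_remove: "tight_ctx \<Gamma> \<Longrightarrow> tight_ctx (ctx_remove \<Gamma> p)"
  by (simp add: tight_ctx_def tight_m_def ctx_remove_def)

lemma ctx_union_empty_right [simp]: "\<Gamma> \<and>\<^sub>c empty_ctx = \<Gamma>"
  by (simp add: ctx_union_def empty_ctx_def)

lemma cdom_ctx_restrict: "cdom (ctx_restrict \<Gamma> p) \<subseteq> pvars p"
  by (auto simp: cdom_def ctx_restrict_def)

lemma pat_typ_pair_tight:
  "tight_ctx \<Gamma> \<Longrightarrow> pat_typ (ctx_restrict \<Gamma> (PPair p q)) (PPair p q) {#TightN#} 0 0 1"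
  by (intro pat_p cdom_ctx_restrict tight_ctx_restrict)

lemma mtyp_singleton: "ttyp \<Gamma> t \<sigma> b e m f \<Longrightarrow> mtyp \<Gamma> t {#\<sigma>#} b e m f"
  using many_add[OF _ many_empty] by fastforce

lemma ttyp_match_tight:
  assumes "ttyp \<Gamma> t \<sigma> b e m f" and "tight_ctx \<Gamma>" and "ttyp \<Delta> u TightN b' e' m' f'"
  shows "ttyp (ctx_remove \<Gamma> (PPair p q) \<and>\<^sub>c \<Delta>) (TSub t (PPair p q) u) \<sigma>
           (b + b') (e + e') (m + m') (f + f' + 1)"
  using match[OF assms(1) pat_typ_pair_tight[OF assms(2)] mtyp_singleton[OF assms(3)]] by simp

lemma canonical_tight_typing:
  shows "canM t \<Longrightarrow> \<exists>\<Gamma> \<tau>. tight \<tau> \<and> tight_ctx \<Gamma> \<and> ttyp \<Gamma> t \<tau> 0 0 0 (csize t)"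
    and "canN u \<Longrightarrow> \<exists>\<Gamma>. tight_ctx \<Gamma> \<and> ttyp \<Gamma> u TightN 0 0 0 (csize u)"
proof (induction t and u rule: canM_canN.inducts)
  case (cM_lam t p)
  then obtain \<Gamma> \<tau> where \<tau>: "tight \<tau>" and \<Gamma>: "tight_ctx \<Gamma>"
    and t: "ttyp \<Gamma> t \<tau> 0 0 0 (csize t)"
    by blast
  have "ttyp (ctx_remove \<Gamma> p) (TLam p t) TightM 0 0 0 (csize (TLam p t))"
    using abs_p[OF t \<tau> tight_ctx_restrict[OF \<Gamma>]] by simp
  then show ?case
    using \<Gamma> tight_ctx_remove by (auto simp: tight_def)
next
  case (cM_pair t u)
  show ?case
    using pair_p tight_ctx_empty by (auto simp: tight_def)
next
  case (cM_sub t u p q)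
  then obtain \<Gamma> \<tau> \<Delta> where \<tau>: "tight \<tau>" and \<Gamma>: "tight_ctx \<Gamma>"
    and t: "ttyp \<Gamma> t \<tau> 0 0 0 (csize t)"
    and \<Delta>: "tight_ctx \<Delta>" and u: "ttyp \<Delta> u TightN 0 0 0 (csize u)"
    by blast
  have "ttyp (ctx_remove \<Gamma> (PPair p q) \<and>\<^sub>c \<Delta>) (TSub t (PPair p q) u) \<tau> 0 0 0
          (csize (TSub t (PPair p q) u))"
    using ttyp_match_tight[OF t \<Gamma> u] by simp
  then show ?case
    using \<tau> tight_ctx_union[OF tight_ctx_remove[OF \<Gamma>] \<Delta>] by blast
next
  case (cM_N t)
  then show ?case
    by (auto simp: tight_def)
next
  case (cN_var x)
  show ?case
    using ax tight_ctx_single by (fastforce simp: tight_def)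
next
  case (cN_app t u)
  then show ?case
    using app_p by fastforce
next
  case (cN_sub t u p q)
  then obtain \<Gamma> \<Delta> where \<Gamma>: "tight_ctx \<Gamma>" and t: "ttyp \<Gamma> t TightN 0 0 0 (csize t)"
    and \<Delta>: "tight_ctx \<Delta>" and u: "ttyp \<Delta> u TightN 0 0 0 (csize u)"
    by blast
  have "ttyp (ctx_remove \<Gamma> (PPair p q) \<and>\<^sub>c \<Delta>) (TSub t (PPair p q) u) TightN 0 0 0
          (csize (TSub t (PPair p q) u))"
    using ttyp_match_tight[OF t \<Gamma> u] by simp
  then show ?case
    using tight_ctx_union[OF tight_ctx_remove[OF \<Gamma>] \<Delta>] by blast
qed

theorem lemma7:
  assumes "wf_trm t" and "canM t"
  shows "\<exists>\<Gamma> \<tau>. tight \<tau> \<and> tight_ctx \<Gamma> \<and> ttyp \<Gamma> t \<tau> 0 0 0 (csize t)"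
  using canonical_tight_typing(1)[OF assms(2)] .

end
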